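(* Let $T$ be a minimal homeomorphism of a compact metric space $X$, let $G$ be a locally compact second countable group, let $f:X\to G$ be continuous, and let $\{H_x\}_{x\in X}$ be a consistent selection of subgroups for $f$. Let $U\subseteq G$ be a relatively compact open set. Then the set $$M_U=\{x\in X: E_x\cap\big(\overline U H_x\setminus UH_x\big)=\varnothing\}$$ is open in $X$.
   Context: The cocycle generated by $f$ is $f(n,x)=f(T^{n-1}x)\cdots f(x)$ for $n\ge1$, $f(0,x)=e$, $f(n,x)=f(-n,T^nx)^{-1}$ for $n<0$; $T_f(x,g)=(Tx,f(x)g)$ on $X\times G$. The (local) essential range at $x\in X$ is $E_x=E_x(f)$, the set of all $g\in G$ such that for every open neighbourhood $\mathcal U$ of $x$ in $X$ and every open neighbourhood $V$ of $e$ in $G$ there is $n\in\mathbb Z$ and $y\in\mathcal U\cap T^{-n}\mathcal U$ with $f(n,y)\in Vg$. Let $\mathcal C(G)$ be the space of closed subgroups of $G$ with the Fell topology (the topology on closed subsets with basis sets $\{S: S\cap K=\varnothing, S\cap O_i\neq\varnothing, i=1,\dots,k\}$, $K$ compact, $O_i$ open). A consistent selection of subgroups is a continuous map $x\mapsto H_x$ from $X$ to $\mathcal C(G)$ such that $H_x\subseteq E_x$ for every $x$ and $H_{T^nx}=f(n,x)H_xf(n,x)^{-1}$ for all $x\in X$, $n\in\mathbb Z$. *)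

theory Defs
  imports "HOL-Analysis.Analysis"
begin

definition zpow :: "('a \<Rightarrow> 'a) \<Rightarrow> int \<Rightarrow> 'a \<Rightarrow> 'a" where
  "zpow T n = (if 0 \<le> n then T ^^ nat n else (inv T) ^^ nat (- n))"

definition homeo :: "('a::topological_space \<Rightarrow> 'a) \<Rightarrow> bool" where
  "homeo T \<longleftrightarrow> bij T \<and> continuous_on UNIV T \<and> continuous_on UNIV (inv T)"

definition minimal_homeo :: "('a::topological_space \<Rightarrow> 'a) \<Rightarrow> bool" where
  "minimal_homeo T \<longleftrightarrow> homeo T \<and> (\<forall>x. closure {zpow T n x | n. True} = UNIV)"

text \<open>The group G is written additively (type class topological_group_add, not
  assumed commutative): product g h is g + h, identity e is 0, inverse is uminus.\<close>
fun cocycle_nat :: "('a \<Rightarrow> 'a) \<Rightarrow> ('a \<Rightarrow> 'g::group_add) \<Rightarrow> nat \<Rightarrow> 'a \<Rightarrow> 'g" where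
  "cocycle_nat T f 0 x = 0"
| "cocycle_nat T f (Suc n) x = f ((T ^^ n) x) + cocycle_nat T f n x"

definition cocycle :: "('a \<Rightarrow> 'a) \<Rightarrow> ('a \<Rightarrow> 'g::group_add) \<Rightarrow> int \<Rightarrow> 'a \<Rightarrow> 'g" where
  "cocycle T f n x = (if 0 \<le> n then cocycle_nat T f (nat n) x
                      else - cocycle_nat T f (nat (- n)) (zpow T n x))"

definition ess_range :: "('a::topological_space \<Rightarrow> 'a) \<Rightarrow> ('a \<Rightarrow> 'g::{group_add,topological_space}) \<Rightarrow> 'a \<Rightarrow> 'g set" where
  "ess_range T f x = {g. \<forall>U V. open U \<longrightarrow> x \<in> U \<longrightarrow> open V \<longrightarrow> (0::'g) \<in> V \<longrightarrow>
      (\<exists>n::int. \<exists>y. y \<in> U \<and> zpow T n y \<in> U \<and> cocycle T f n y \<in> {v + g | v. v \<in> V})}"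

definition closed_subgroup :: "'g::{group_add,topological_space} set \<Rightarrow> bool" where
  "closed_subgroup H \<longleftrightarrow> closed H \<and> 0 \<in> H \<and> (\<forall>a\<in>H. \<forall>b\<in>H. a + b \<in> H) \<and> (\<forall>a\<in>H. - a \<in> H)"

definition fell_topology :: "'g::topological_space set topology" where
  "fell_topology = topology_generated_by
     ({{S. closed S \<and> S \<inter> K = {}} | K. compact K} \<union> {{S. closed S \<and> S \<inter> W \<noteq> {}} | W. open W})"

definition subgroup_space :: "'g::{group_add,topological_space} set topology" where
  "subgroup_space = subtopology fell_topology {H. closed_subgroup H}"

definition set_plus :: "'g::plus set \<Rightarrow> 'g set \<Rightarrow> 'g set" where
  "set_plus A B = {a + b | a b. a \<in> A \<and> b \<in> B}"

definition consistent_selection ::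
  "('a::topological_space \<Rightarrow> 'a) \<Rightarrow> ('a \<Rightarrow> 'g::{group_add,topological_space}) \<Rightarrow> ('a \<Rightarrow> 'g set) \<Rightarrow> bool" where
  "consistent_selection T f H \<longleftrightarrow>
     continuous_map euclidean subgroup_space H \<and>
     (\<forall>x. H x \<subseteq> ess_range T f x) \<and>
     (\<forall>x. \<forall>n::int. H (zpow T n x) = {cocycle T f n x + h - cocycle T f n x | h. h \<in> H x})"

end

theory Submission
  imports Defs
begin

text \<open>Writing the group additively, the heart of the matter is that the essential range is
  absorbing, \<open>E\<^sub>x + H\<^sub>x \<subseteq> E\<^sub>x\<close>: a return time \<open>n\<close> of a point \<open>y\<close> near \<open>x\<close> with cocycle near \<open>g \<in> E\<^sub>x\<close>,
  followed by a return time \<open>m\<close> of a point \<open>z\<close> near \<open>y\<close> with cocycle near some \<open>h' \<in> H\<^sub>y \<subseteq> E\<^sub>y\<close>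
  close to \<open>h \<in> H\<^sub>x\<close> (lower semicontinuity of the selection), gives by the cocycle identity the return
  time \<open>n + m\<close> of \<open>z\<close> with cocycle near \<open>g + h\<close>. Consequently \<open>x \<in> M\<^sub>U\<close> iff every \<open>u \<in> closure U\<close>
  lies outside \<open>E\<^sub>x\<close> or inside \<open>U + H\<^sub>x\<close>. The graph of \<open>E\<close> is closed in \<open>X \<times> G\<close> and the graph of
  \<open>y \<mapsto> U + H\<^sub>y\<close> is open, so the pairs satisfying this alternative form an open set, and the tube
  lemma for the compact set \<open>closure U\<close> shows that \<open>M\<^sub>U\<close> is open.\<close>

lemma zpow_add_one:
  assumes "bij T"
  shows "zpow T (k + 1) x = T (zpow T k x)"
proof (cases "0 \<le> k")
  case True
  then have "nat (k + 1) = Suc (nat k)" by simp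
  with True show ?thesis by (simp add: zpow_def)
next
  case False
  define i where "i = nat (- k) - 1"
  have i: "nat (- k) = Suc i" "nat (- (k + 1)) = i" using False unfolding i_def by arith+
  have "T (inv T ((inv T ^^ i) x)) = (inv T ^^ i) x"
    using assms by (simp add: bij_is_surj surj_f_inv_f)
  with False i show ?thesis by (auto simp add: zpow_def)
qed

lemma zpow_diff_one:
  assumes "bij T"
  shows "zpow T (k - 1) x = inv T (zpow T k x)"
  using zpow_add_one[OF assms, of "k - 1" x] assms by (simp add: bij_is_inj)

lemma zpow_add:
  assumes "bij T"
  shows "zpow T (n + m) x = zpow T n (zpow T m x)"
proof (induction n rule: int_induct[where k = 0])
  case base
  then show ?case by (simp add: zpow_def)
next
  case (step1 i)
  then show ?case
    using zpow_add_one[OF assms, of "i + m"] zpow_add_one[OF assms, of i]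
    by (simp add: algebra_simps)
next
  case (step2 i)
  then show ?case
    using zpow_diff_one[OF assms, of "i + m"] zpow_diff_one[OF assms, of i]
    by (simp add: algebra_simps)
qed

lemma cocycle_nat_Suc_right: "cocycle_nat T f (Suc i) x = cocycle_nat T f i (T x) + f x"
proof (induction i)
  case 0
  then show ?case by simp
next
  case (Suc i)
  then show ?case by (simp add: funpow_swap1 add.assoc)
qed

lemma cocycle_add_one:
  assumes "bij T"
  shows "cocycle T f (k + 1) x = f (zpow T k x) + cocycle T f k x"
proof (cases "0 \<le> k")
  case True
  then have "nat (k + 1) = Suc (nat k)" by simp
  with True show ?thesis by (simp add: cocycle_def zpow_def)
next
  case False
  define i where "i = nat (- k) - 1"
  have i: "nat (- k) = Suc i" "nat (- (k + 1)) = i" using False unfolding i_def by arith+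
  define w where "w = zpow T k x"
  have "zpow T (k + 1) x = T w" unfolding w_def by (rule zpow_add_one[OF assms])
  then have "cocycle T f (k + 1) x = - cocycle_nat T f i (T w)"
    using False i by (cases "k + 1 = 0") (simp_all add: cocycle_def)
  moreover have "cocycle T f k x = - cocycle_nat T f (Suc i) w"
    using False i by (simp add: cocycle_def w_def del: cocycle_nat.simps)
  then have "cocycle T f k x = - f w + - cocycle_nat T f i (T w)"
    by (simp only: cocycle_nat_Suc_right minus_add)
  ultimately show ?thesis unfolding w_def[symmetric] by (simp only: add_minus_cancel)
qed

lemma cocycle_add:
  assumes "bij T"
  shows "cocycle T f (n + m) x = cocycle T f n (zpow T m x) + cocycle T f m x"
proof (induction n rule: int_induct[where k = 0])
  case base
  then show ?case by (simp add: cocycle_def)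
next
  case (step1 i)
  then show ?case
    using cocycle_add_one[OF assms, of f "i + m" x] cocycle_add_one[OF assms, of f i "zpow T m x"]
      zpow_add[OF assms, of i m x]
    by (simp add: algebra_simps add.assoc)
next
  case (step2 i)
  have "cocycle T f (i - 1 + m) x = - f (zpow T (i - 1 + m) x) + cocycle T f (i + m) x"
    using cocycle_add_one[OF assms, of f "i - 1 + m" x] by (simp add: add.assoc[symmetric])
  moreover have "cocycle T f (i - 1) (zpow T m x)
      = - f (zpow T (i - 1) (zpow T m x)) + cocycle T f i (zpow T m x)"
    using cocycle_add_one[OF assms, of f "i - 1" "zpow T m x"] by (simp add: add.assoc[symmetric])
  ultimately show ?case using step2 zpow_add[OF assms, of "i - 1" m x] by (simp add: add.assoc)
qed

lemma continuous_on_funpow: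
  fixes g :: "'a::topological_space \<Rightarrow> 'a"
  assumes "continuous_on UNIV g"
  shows "continuous_on UNIV (g ^^ k)"
proof (induction k)
  case 0
  have "g ^^ 0 = (\<lambda>x. x)" by auto
  then show ?case by (simp add: continuous_on_id)
next
  case (Suc k)
  have "g ^^ Suc k = (\<lambda>x. g ((g ^^ k) x))" by auto
  with Suc show ?case using continuous_on_compose2[OF assms] by simp
qed

lemma continuous_on_zpow: "homeo T \<Longrightarrow> continuous_on UNIV (zpow T k)"
  unfolding homeo_def zpow_def by (auto intro: continuous_on_funpow)

lemma continuous_on_cocycle_nat:
  fixes f :: "'a::topological_space \<Rightarrow> 'g::topological_group_add"
  assumes "continuous_on UNIV f" "continuous_on UNIV T"
  shows "continuous_on UNIV (cocycle_nat T f k)"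
proof (induction k)
  case 0
  then show ?case by (simp add: continuous_on_const)
next
  case (Suc k)
  have "continuous_on UNIV (\<lambda>x. f ((T ^^ k) x))"
    using continuous_on_compose2[OF assms(1) continuous_on_funpow[OF assms(2)]] by simp
  with Suc show ?case by (simp add: continuous_on_add)
qed

lemma continuous_on_cocycle:
  fixes f :: "'a::topological_space \<Rightarrow> 'g::topological_group_add"
  assumes "homeo T" "continuous_on UNIV f"
  shows "continuous_on UNIV (cocycle T f k)"
proof -
  have nat: "continuous_on UNIV (cocycle_nat T f j)" for j
    using continuous_on_cocycle_nat assms by (auto simp: homeo_def)
  have "continuous_on UNIV (\<lambda>x. - cocycle_nat T f (nat (- k)) (zpow T k x))"
    using continuous_on_compose2[OF nat continuous_on_zpow[OF assms(1)]]
    by (auto intro: continuous_on_minus)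
  with nat show ?thesis unfolding cocycle_def by (cases "0 \<le> k") auto
qed

lemma mem_ess_range_iff:
  fixes f :: "'a::topological_space \<Rightarrow> 'g::topological_group_add"
  shows "g \<in> ess_range T f x \<longleftrightarrow> (\<forall>U W. open U \<longrightarrow> x \<in> U \<longrightarrow> open W \<longrightarrow> g \<in> W \<longrightarrow>
           (\<exists>n y. y \<in> U \<and> zpow T n y \<in> U \<and> cocycle T f n y \<in> W))"
proof -
  have translate: "(\<exists>v. c = v + g \<and> v \<in> V) \<longleftrightarrow> c - g \<in> V" for c and V :: "'g set"
  proof
    assume "c - g \<in> V"
    then show "\<exists>v. c = v + g \<and> v \<in> V" by (intro exI[of _ "c - g"]) simp
  qed auto
  have "g \<in> ess_range T f x \<longleftrightarrow> (\<forall>U V. open U \<longrightarrow> x \<in> U \<longrightarrow> open V \<longrightarrow> 0 \<in> V \<longrightarrow>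
           (\<exists>n y. y \<in> U \<and> zpow T n y \<in> U \<and> cocycle T f n y - g \<in> V))"
    by (simp only: ess_range_def mem_Collect_eq translate)
  also have "\<dots> \<longleftrightarrow> (\<forall>U W. open U \<longrightarrow> x \<in> U \<longrightarrow> open W \<longrightarrow> g \<in> W \<longrightarrow>
           (\<exists>n y. y \<in> U \<and> zpow T n y \<in> U \<and> cocycle T f n y \<in> W))"
  proof (intro iffI allI impI)
    fix U :: "'a set" and W :: "'g set"
    assume "\<forall>U V. open U \<longrightarrow> x \<in> U \<longrightarrow> open V \<longrightarrow> 0 \<in> V \<longrightarrow>
           (\<exists>n y. y \<in> U \<and> zpow T n y \<in> U \<and> cocycle T f n y - g \<in> V)"
      and "open U" "x \<in> U" "open W" "g \<in> W"
    moreover have "open ((\<lambda>w. w + g) -` W)" by (intro open_vimage \<open>open W\<close> continuous_intros)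
    moreover have "0 \<in> (\<lambda>w. w + g) -` W" using \<open>g \<in> W\<close> by simp
    ultimately obtain n y where "y \<in> U" "zpow T n y \<in> U" "cocycle T f n y - g \<in> (\<lambda>w. w + g) -` W"
      by blast
    then show "\<exists>n y. y \<in> U \<and> zpow T n y \<in> U \<and> cocycle T f n y \<in> W" by auto
  next
    fix U :: "'a set" and V :: "'g set"
    assume "\<forall>U W. open U \<longrightarrow> x \<in> U \<longrightarrow> open W \<longrightarrow> g \<in> W \<longrightarrow>
           (\<exists>n y. y \<in> U \<and> zpow T n y \<in> U \<and> cocycle T f n y \<in> W)"
      and "open U" "x \<in> U" "open V" "0 \<in> V"
    moreover have "open ((\<lambda>w. w - g) -` V)" by (intro open_vimage \<open>open V\<close> continuous_intros)
    moreover have "g \<in> (\<lambda>w. w - g) -` V" using \<open>0 \<in> V\<close> by simp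
    ultimately obtain n y where "y \<in> U" "zpow T n y \<in> U" "cocycle T f n y \<in> (\<lambda>w. w - g) -` V"
      by blast
    then show "\<exists>n y. y \<in> U \<and> zpow T n y \<in> U \<and> cocycle T f n y - g \<in> V" by auto
  qed
  finally show ?thesis .
qed

lemma closed_ess_range_graph:
  fixes f :: "'a::topological_space \<Rightarrow> 'g::topological_group_add"
  shows "closed {p. snd p \<in> ess_range T f (fst p)}"
  unfolding closed_def
proof (rule open_prod_intro)
  fix p assume "p \<in> - {p. snd p \<in> ess_range T f (fst p)}"
  then obtain U W where UW: "open U" "fst p \<in> U" "open W" "snd p \<in> W"
    and no_return: "\<And>n y. y \<in> U \<Longrightarrow> zpow T n y \<in> U \<Longrightarrow> cocycle T f n y \<notin> W"
    unfolding mem_ess_range_iff by auto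
  have "U \<times> W \<subseteq> - {p. snd p \<in> ess_range T f (fst p)}"
  proof clarsimp
    fix y v assume y: "y \<in> U" and v: "v \<in> W" "v \<in> ess_range T f y"
    from v(2)[unfolded mem_ess_range_iff, rule_format, OF UW(1) y UW(3) v(1)] no_return
    show False by blast
  qed
  moreover have "p \<in> U \<times> W" using UW by (simp add: mem_Times_iff)
  ultimately show "\<exists>A B. open A \<and> open B \<and> p \<in> A \<times> B \<and> A \<times> B \<subseteq> - {p. snd p \<in> ess_range T f (fst p)}"
    using UW(1,3) by blast
qed

lemma ess_range_add_absorb:
  fixes T :: "'a::topological_space \<Rightarrow> 'a" and f :: "'a \<Rightarrow> 'g::topological_group_add"
  assumes T: "homeo T" and f: "continuous_on UNIV f"
    and lsc: "\<And>W. open W \<Longrightarrow> open {y. H y \<inter> W \<noteq> {}}"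
    and H_sub: "\<And>y. H y \<subseteq> ess_range T f y"
    and g: "g \<in> ess_range T f x" and h: "h \<in> H x"
  shows "g + h \<in> ess_range T f x"
  unfolding mem_ess_range_iff
proof (intro allI impI)
  fix U W assume U: "open U" "x \<in> U" and W: "open W" "g + h \<in> W"
  have bij: "bij T" using T by (simp add: homeo_def)
  have "open ((\<lambda>p. fst p + snd p) -` W)"
    by (intro open_vimage W continuous_intros)
  moreover have "(g, h) \<in> (\<lambda>p. fst p + snd p) -` W" using W(2) by simp
  ultimately obtain A B where AB: "open A" "open B" "(g, h) \<in> A \<times> B"
    and "A \<times> B \<subseteq> (\<lambda>p. fst p + snd p) -` W"
    by (rule open_prod_elim)
  then have sum: "a + b \<in> W" if "a \<in> A" "b \<in> B" for a b
    using that by auto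
  define N where "N = {y. H y \<inter> B \<noteq> {}}"
  have N: "open N" "x \<in> N" using lsc[OF AB(2)] h AB(3) unfolding N_def by auto
  have "open (U \<inter> N)" "x \<in> U \<inter> N" "g \<in> A" using U N AB(1,3) by auto
  then obtain n y where y: "y \<in> U \<inter> N" "zpow T n y \<in> U" "cocycle T f n y \<in> A"
    using g[unfolded mem_ess_range_iff, rule_format, OF _ _ AB(1)] by blast
  obtain h' where h': "h' \<in> H y" "h' \<in> B" using y(1) unfolding N_def by blast
  define Q where "Q = U \<inter> zpow T n -` U \<inter> cocycle T f n -` A"
  have "open Q"
    unfolding Q_def using U(1) AB(1)
    by (intro open_Int open_vimage continuous_on_zpow[OF T] continuous_on_cocycle[OF T f])
  moreover have "y \<in> Q" using y unfolding Q_def by auto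
  moreover have "h' \<in> ess_range T f y" using H_sub h'(1) by blast
  ultimately obtain m z where z: "z \<in> Q" "zpow T m z \<in> Q" "cocycle T f m z \<in> B"
    using AB(2) h'(2) unfolding mem_ess_range_iff by blast
  have "cocycle T f n (zpow T m z) \<in> A" using z(2) unfolding Q_def by simp
  then have "cocycle T f n (zpow T m z) + cocycle T f m z \<in> W" using sum z(3) by blast
  then have "cocycle T f (n + m) z \<in> W" by (simp add: cocycle_add[OF bij])
  moreover have "zpow T (n + m) z \<in> U" using z(2) zpow_add[OF bij] unfolding Q_def by auto
  ultimately show "\<exists>n y. y \<in> U \<and> zpow T n y \<in> U \<and> cocycle T f n y \<in> W"
    using z(1) unfolding Q_def by blast
qed

lemma closed_subgroup_selection:
  assumes "continuous_map euclidean subgroup_space H"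
  shows "closed_subgroup (H x)"
proof -
  have "H x \<in> topspace subgroup_space" using assms unfolding continuous_map_def by auto
  then show ?thesis unfolding subgroup_space_def by simp
qed

lemma open_selection_hitting:
  assumes H: "continuous_map euclidean subgroup_space H" and W: "open W"
  shows "open {y. H y \<inter> W \<noteq> {}}"
proof -
  define hit where "hit = {S. closed S \<and> S \<inter> W \<noteq> {}}"
  have "openin fell_topology hit"
    unfolding fell_topology_def hit_def
    by (rule topology_generated_by_Basis) (use W in blast)
  then have "openin subgroup_space ({S. closed_subgroup S} \<inter> hit)"
    unfolding subgroup_space_def by (rule openin_subtopology_Int2)
  from openin_continuous_map_preimage[OF H this]
  have "open {y. H y \<in> {S. closed_subgroup S} \<inter> hit}" by simp
  moreover have "{y. H y \<in> {S. closed_subgroup S} \<inter> hit} = {y. H y \<inter> W \<noteq> {}}"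
    using closed_subgroup_selection[OF H] unfolding hit_def closed_subgroup_def by blast
  ultimately show ?thesis by simp
qed

lemma open_set_plus_graph:
  fixes U :: "'g::topological_group_add set"
  assumes U: "open U" and lsc: "\<And>W. open W \<Longrightarrow> open {y. H y \<inter> W \<noteq> {}}"
  shows "open {p. snd p \<in> set_plus U (H (fst p))}"
proof (rule open_prod_intro)
  fix p assume "p \<in> {p. snd p \<in> set_plus U (H (fst p))}"
  then obtain w h where wh: "w \<in> U" "h \<in> H (fst p)" "snd p = w + h"
    unfolding set_plus_def by auto
  have "open ((\<lambda>q. fst q - snd q) -` U)"
    by (intro open_vimage U continuous_intros)
  moreover have "(snd p, h) \<in> (\<lambda>q. fst q - snd q) -` U" using wh by simp
  ultimately obtain A B where AB: "open A" "open B" "(snd p, h) \<in> A \<times> B"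
    and "A \<times> B \<subseteq> (\<lambda>q. fst q - snd q) -` U"
    by (rule open_prod_elim)
  then have diff: "a - b \<in> U" if "a \<in> A" "b \<in> B" for a b
    using that by auto
  define N where "N = {y. H y \<inter> B \<noteq> {}}"
  have "N \<times> A \<subseteq> {p. snd p \<in> set_plus U (H (fst p))}"
  proof clarsimp
    fix y a assume "y \<in> N" "a \<in> A"
    then obtain b where "b \<in> H y" "a - b \<in> U" using diff unfolding N_def by blast
    then show "a \<in> set_plus U (H y)"
      unfolding set_plus_def by (intro CollectI exI[of _ "a - b"] exI[of _ b]) simp
  qed
  moreover have "open N" "p \<in> N \<times> A"
    using lsc[OF AB(2)] wh(2) AB(3) unfolding N_def by (auto simp: mem_Times_iff)
  ultimately show "\<exists>A' B'. open A' \<and> open B' \<and> p \<in> A' \<times> B' \<and> A' \<times> B' \<subseteq> {p. snd p \<in> set_plus U (H (fst p))}"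
    using AB(1) by blast
qed

lemma set_plus_absorbing_disjoint_iff:
  assumes "closed_subgroup H" and absorb: "\<And>g h. g \<in> E \<Longrightarrow> h \<in> H \<Longrightarrow> g + h \<in> E"
  shows "E \<inter> (set_plus K H - set_plus U H) = {} \<longleftrightarrow> (\<forall>u\<in>K. u \<in> E \<longrightarrow> u \<in> set_plus U H)"
proof
  assume disj: "E \<inter> (set_plus K H - set_plus U H) = {}"
  have "u \<in> set_plus K H" if "u \<in> K" for u
    using that \<open>closed_subgroup H\<close> unfolding set_plus_def closed_subgroup_def by force
  with disj show "\<forall>u\<in>K. u \<in> E \<longrightarrow> u \<in> set_plus U H" by blast
next
  assume K: "\<forall>u\<in>K. u \<in> E \<longrightarrow> u \<in> set_plus U H"
  show "E \<inter> (set_plus K H - set_plus U H) = {}"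
  proof (rule equals0I)
    fix t assume "t \<in> E \<inter> (set_plus K H - set_plus U H)"
    then obtain u h where t: "t \<in> E" "t \<notin> set_plus U H" and uh: "u \<in> K" "h \<in> H" "t = u + h"
      unfolding set_plus_def by blast
    have "- h \<in> H" using uh(2) \<open>closed_subgroup H\<close> by (simp add: closed_subgroup_def)
    from absorb[OF t(1) this] have "u \<in> E" by (simp add: uh(3) add.assoc)
    then obtain w h' where w: "w \<in> U" "h' \<in> H" "u = w + h'"
      using K uh(1) unfolding set_plus_def by blast
    have "h' + h \<in> H" using w(2) uh(2) \<open>closed_subgroup H\<close> by (simp add: closed_subgroup_def)
    moreover have "t = w + (h' + h)" using uh(3) w(3) by (simp add: add.assoc)
    ultimately have "t \<in> set_plus U H" using w(1) unfolding set_plus_def by blast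
    with t(2) show False by contradiction
  qed
qed

lemma open_tube_slices:
  assumes "compact K" "open S"
  shows "open {x. {x} \<times> K \<subseteq> S}"
proof -
  have "\<exists>X. open X \<and> x \<in> X \<and> X \<subseteq> {x. {x} \<times> K \<subseteq> S}" if x: "{x} \<times> K \<subseteq> S" for x
  proof -
    obtain X where "x \<in> X" "open X" "X \<times> K \<subseteq> S"
      using Elementary_Topology.tube_lemma[OF assms x] by blast
    then show ?thesis by blast
  qed
  then show ?thesis
    unfolding open_subopen[of "{x. {x} \<times> K \<subseteq> S}"] by (intro ballI) simp
qed

theorem lemma3p1:
  fixes T :: "'a::metric_space \<Rightarrow> 'a"
    and f :: "'a \<Rightarrow> 'g::{topological_group_add, t2_space, second_countable_topology}"
    and H :: "'a \<Rightarrow> 'g set"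
    and U :: "'g set"
  assumes "compact (UNIV :: 'a set)"
    and "minimal_homeo T"
    and "locally_compact_space (euclidean :: 'g topology)"
    and "continuous_on UNIV f"
    and "consistent_selection T f H"
    and "open U" and "compact (closure U)"
  shows "open {x. ess_range T f x \<inter> (set_plus (closure U) (H x) - set_plus U (H x)) = {}}"
proof -
  have T: "homeo T" using assms(2) by (simp add: minimal_homeo_def)
  have H: "continuous_map euclidean subgroup_space H" and H_sub: "\<And>y. H y \<subseteq> ess_range T f y"
    using assms(5) by (auto simp: consistent_selection_def)
  note lsc = open_selection_hitting[OF H]
  define good where "good = {p. snd p \<in> ess_range T f (fst p) \<longrightarrow> snd p \<in> set_plus U (H (fst p))}"
  have "open good"
    unfolding good_def using closed_ess_range_graph open_set_plus_graph[OF assms(6) lsc]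
    by (rule open_Collect_imp)
  have disjoint_iff: "ess_range T f x \<inter> (set_plus (closure U) (H x) - set_plus U (H x)) = {}
      \<longleftrightarrow> (\<forall>u\<in>closure U. u \<in> ess_range T f x \<longrightarrow> u \<in> set_plus U (H x))" for x
    by (rule set_plus_absorbing_disjoint_iff[OF closed_subgroup_selection[OF H]])
      (rule ess_range_add_absorb[OF T assms(4) lsc H_sub])
  have tube_iff: "{x} \<times> closure U \<subseteq> good
      \<longleftrightarrow> (\<forall>u\<in>closure U. u \<in> ess_range T f x \<longrightarrow> u \<in> set_plus U (H x))" for x
    unfolding good_def by auto
  have M_eq: "{x. ess_range T f x \<inter> (set_plus (closure U) (H x) - set_plus U (H x)) = {}}
      = {x. {x} \<times> closure U \<subseteq> good}"
    by (simp only: disjoint_iff tube_iff)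
  show ?thesis
    unfolding M_eq using open_tube_slices[OF assms(7) \<open>open good\<close>] .
qed

end
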